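(* Let $a>0$, $D>0$, $g>0$, $l_{\mathrm{c}}>0$, $c_{\infty}>0$ and $c_{\mathrm{s}}\ge 0$ be constants. A steady-state solution is a pair $(l_{\infty},c)$ with $l_{\infty}>0$ and $c\in C^2([0,l_{\infty}])$ satisfying \[ D c''(x)-a c'(x)-g c(x)=0\ (0<x<l_{\infty}),\qquad D c'(l_{\infty})=(a-gl_{\mathrm{c}})c_{\infty},\qquad c(l_{\infty})=c_{\infty},\qquad c(0)=c_{\mathrm{s}}. \] Set $R=\sqrt{a^2+4gD}$, $\lambda_{\pm}=(a\pm R)/(2D)$, \[ f(z)=\frac{1}{R}\left[\mathrm{e}^{-\lambda_+ z}\left(\frac{R+a}{2}-gl_{\mathrm{c}}\right)+\mathrm{e}^{-\lambda_- z}\left(\frac{R-a}{2}+gl_{\mathrm{c}}\right)\right], \] and, for a given $l_{\infty}>0$, \[ c(x)=\frac{c_{\infty}}{R}\left[\left(\frac{R+a}{2}-gl_{\mathrm{c}}\right)\mathrm{e}^{\lambda_+(x-l_{\infty})}+\left(\frac{R-a}{2}+gl_{\mathrm{c}}\right)\mathrm{e}^{\lambda_-(x-l_{\infty})}\right],\quad 0\le x\le l_{\infty}.\qquad(\ast) \] Then: (I) If $gl_{\mathrm{c}}<a$, then \[ z_0=\frac{D}{R}\log\frac{(R+a)(R+a-2gl_{\mathrm{c}})}{(R-a)(R-a+2gl_{\mathrm{c}})} \] satisfies $z_0>0$, and (i) if $c_{\mathrm{s}}/c_{\infty}<f(z_0)<1$, no steady-state solution exists; (ii) if $c_{\mathrm{s}}/c_{\infty}=f(z_0)$,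 there is a unique steady-state solution; it has $l_{\infty}=z_0$ and $c$ given by $(\ast)$, which is an increasing function; (iii) if $f(z_0)<c_{\mathrm{s}}/c_{\infty}<1$, there exist exactly two steady-state solutions $(l_{\infty 1},c_1)$, $(l_{\infty 2},c_2)$ with $0<l_{\infty 1}<z_0<l_{\infty 2}$, where $c_i$ is given by $(\ast)$ with $l_{\infty}=l_{\infty i}$; $c_1$ is increasing on $[0,l_{\infty 1}]$, and $c_2$ is decreasing on $[0,l_{\infty 2}-z_0]$ and increasing on $[l_{\infty 2}-z_0,l_{\infty 2}]$; (iv) if $c_{\mathrm{s}}/c_{\infty}\ge 1$, there is a unique steady-state solution; it has $l_{\infty}>z_0$, and $c$ given by $(\ast)$ is decreasing on $(0,l_{\infty}-z_0]$ and increasing on $[l_{\infty}-z_0,l_{\infty}]$. (II) If $gl_{\mathrm{c}}\ge a$, then there exists a steady-state solution if and only if $c_{\mathrm{s}}>c_{\infty}$; in that case the equation $f(l_{\infty})=c_{\mathrm{s}}/c_{\infty}$ has a unique solution $l_{\infty}>0$, the steady-state solution is unique, given by this $l_{\infty}$ and $(\ast)$, and $c$ is a decreasing function.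
   Context: This is the steady-state problem of a one-dimensional model of axonal growth: $c(x)$ is the tubulin concentration along an axon of length $l_{\infty}$, $a$ is the active transport velocity, $D$ the diffusion coefficient, $g$ the degradation rate, $l_{\mathrm{c}}$ the characteristic length of the growth cone, $c_{\infty}$ the steady-state growth cone concentration, and $c_{\mathrm{s}}$ the (constant) soma concentration. In every case, a steady-state length $l_{\infty}>0$ together with $c$ is a steady-state solution exactly when $f(l_{\infty})=c_{\mathrm{s}}/c_{\infty}$ and $c$ is given by $(\ast)$. *)

theory Defs
  imports "HOL-Analysis.Analysis"
begin

text \<open>Steady-state solution (l, c): l > 0, c in C^2([0,l]) (one-sided derivatives at the
endpoints, i.e. derivatives within [0,l]), the ODE on (0,l) and the boundary conditions.\<close>
definition steady_state ::
  "real \<Rightarrow> real \<Rightarrow> real \<Rightarrow> real \<Rightarrow> real \<Rightarrow> real \<Rightarrow> real \<Rightarrow> (real \<Rightarrow> real) \<Rightarrow> bool" where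
  "steady_state a D g lc cinf cs l c \<longleftrightarrow>
     0 < l \<and>
     (\<exists>c1 c2.
        (\<forall>x\<in>{0..l}. (c has_real_derivative c1 x) (at x within {0..l}) \<and>
                     (c1 has_real_derivative c2 x) (at x within {0..l})) \<and>
        continuous_on {0..l} c2 \<and>
        (\<forall>x\<in>{0<..<l}. D * c2 x - a * c1 x - g * c x = 0) \<and>
        D * c1 l = (a - g * lc) * cinf) \<and>
     c l = cinf \<and> c 0 = cs"

definition RR :: "real \<Rightarrow> real \<Rightarrow> real \<Rightarrow> real" where
  "RR a D g = sqrt (a\<^sup>2 + 4 * g * D)"

definition lam_plus :: "real \<Rightarrow> real \<Rightarrow> real \<Rightarrow> real" where
  "lam_plus a D g = (a + RR a D g) / (2 * D)"

definition lam_minus :: "real \<Rightarrow> real \<Rightarrow> real \<Rightarrow> real" where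
  "lam_minus a D g = (a - RR a D g) / (2 * D)"

definition ff :: "real \<Rightarrow> real \<Rightarrow> real \<Rightarrow> real \<Rightarrow> real \<Rightarrow> real" where
  "ff a D g lc z = (1 / RR a D g) *
     (exp (- lam_plus a D g * z) * ((RR a D g + a) / 2 - g * lc) +
      exp (- lam_minus a D g * z) * ((RR a D g - a) / 2 + g * lc))"

definition cstar :: "real \<Rightarrow> real \<Rightarrow> real \<Rightarrow> real \<Rightarrow> real \<Rightarrow> real \<Rightarrow> real \<Rightarrow> real" where
  "cstar a D g lc cinf l x = (cinf / RR a D g) *
     (((RR a D g + a) / 2 - g * lc) * exp (lam_plus a D g * (x - l)) +
      ((RR a D g - a) / 2 + g * lc) * exp (lam_minus a D g * (x - l)))"

definition z0 :: "real \<Rightarrow> real \<Rightarrow> real \<Rightarrow> real \<Rightarrow> real" where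
  "z0 a D g lc = (D / RR a D g) *
     ln (((RR a D g + a) * (RR a D g + a - 2 * g * lc)) /
         ((RR a D g - a) * (RR a D g - a + 2 * g * lc)))"

end

theory Submission
  imports Defs
begin

text \<open>The characteristic roots of \<open>D c'' - a c' - g c = 0\<close> are \<open>p = \<lambda>\<^sub>+ > 0 > m = \<lambda>\<^sub>-\<close>.
  The two conditions at \<open>x = l\<close> fix the Cauchy data there, so by uniqueness for the linear
  equation every steady state is the profile \<open>c(x) = c\<^sub>\<infinity> f(l - x)\<close>, and steady states of
  length \<open>l\<close> correspond to roots \<open>l > 0\<close> of \<open>f(l) = c\<^sub>s / c\<^sub>\<infinity>\<close>. Now \<open>f(0) = 1\<close>,
  \<open>f(z) \<rightarrow> \<infinity>\<close>, and \<open>f'(z)\<close> has the sign of \<open>exp((p - m) z) - K\<close> with \<open>K > 1\<close> iff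
  \<open>g l\<^sub>c < a\<close>. So either \<open>f\<close> decreases on \<open>(-\<infinity>, z\<^sub>0]\<close> and increases on \<open>[z\<^sub>0, \<infinity>)\<close> with
  \<open>z\<^sub>0 = ln K / (p - m) > 0\<close>, or \<open>f\<close> increases on \<open>[0, \<infinity>)\<close>; counting roots and reading the
  monotonicity of \<open>c\<close> off that of \<open>f\<close> gives all cases.\<close>

lemma linear_ode1_zero:
  fixes u :: "real \<Rightarrow> real"
  assumes "convex S" "l \<in> S" "u l = 0"
    and deriv: "\<And>x. x \<in> S \<Longrightarrow> (u has_real_derivative k * u x) (at x within S)"
    and "x \<in> S"
  shows "u x = 0"
proof -
  have "\<exists>c. \<forall>y\<in>S. u y * exp (- k * y) = c"
  proof (rule has_field_derivative_zero_constant)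
    fix y assume "y \<in> S"
    then have "((\<lambda>y. u y * exp (- k * y)) has_real_derivative
                 k * u y * exp (- k * y) + u y * (exp (- k * y) * - k)) (at y within S)"
      by (auto intro!: derivative_eq_intros deriv)
    then show "((\<lambda>y. u y * exp (- k * y)) has_real_derivative 0) (at y within S)"
      by (simp add: algebra_simps)
  qed fact
  then obtain c where "\<forall>y\<in>S. u y * exp (- k * y) = c" ..
  then have "u x * exp (- k * x) = u l * exp (- k * l)"
    using assms(2,5) by simp
  then show ?thesis
    using \<open>u l = 0\<close> by simp
qed

text \<open>With \<open>u = w' - m w\<close> the equation \<open>w'' = (p + m) w' - p m w\<close> splits into
  \<open>u' = p u\<close> and \<open>w' = m w + u\<close>.\<close>
lemma linear_ode2_zero:
  fixes w w' w'' :: "real \<Rightarrow> real"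
  assumes "convex S" "l \<in> S" "w l = 0" "w' l = 0"
    and deriv1: "\<And>x. x \<in> S \<Longrightarrow> (w has_real_derivative w' x) (at x within S)"
    and deriv2: "\<And>x. x \<in> S \<Longrightarrow> (w' has_real_derivative w'' x) (at x within S)"
    and ode: "\<And>x. x \<in> S \<Longrightarrow> w'' x = (p + m) * w' x - p * m * w x"
    and "x \<in> S"
  shows "w x = 0"
proof -
  have u_zero: "w' y - m * w y = 0" if "y \<in> S" for y
  proof (rule linear_ode1_zero[where k = p, OF assms(1,2) _ _ that])
    show "w' l - m * w l = 0"
      using assms(3,4) by simp
    fix x assume "x \<in> S"
    then show "((\<lambda>y. w' y - m * w y) has_real_derivative p * (w' x - m * w x)) (at x within S)"
      using deriv1 deriv2 ode by (auto intro!: derivative_eq_intros simp: algebra_simps)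
  qed
  show ?thesis
    using linear_ode1_zero[of S l w m x] assms(1,2,3,8) deriv1 u_zero
    by (metis eq_iff_diff_eq_0)
qed

lemma strict_mono_on_if_deriv_pos:
  fixes f f' :: "real \<Rightarrow> real"
  assumes deriv: "\<And>x. (f has_real_derivative f' x) (at x)"
    and pos: "\<And>x y z. x \<in> S \<Longrightarrow> y \<in> S \<Longrightarrow> x < z \<Longrightarrow> z < y \<Longrightarrow> 0 < f' z"
  shows "strict_mono_on S f"
proof (rule monotone_onI)
  fix x y assume "x \<in> S" "y \<in> S" "x < y"
  moreover have "continuous_on {x..y} f"
    using deriv by (meson DERIV_continuous continuous_at_imp_continuous_on)
  ultimately show "f x < f y"
    using deriv pos by (blast intro: DERIV_pos_imp_increasing_open)
qed

lemma strict_antimono_on_if_deriv_neg: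
  fixes f f' :: "real \<Rightarrow> real"
  assumes deriv: "\<And>x. (f has_real_derivative f' x) (at x)"
    and neg: "\<And>x y z. x \<in> S \<Longrightarrow> y \<in> S \<Longrightarrow> x < z \<Longrightarrow> z < y \<Longrightarrow> f' z < 0"
  shows "strict_antimono_on S f"
proof (rule monotone_onI)
  fix x y assume "x \<in> S" "y \<in> S" "x < y"
  moreover have "continuous_on {x..y} f"
    using deriv by (meson DERIV_continuous continuous_at_imp_continuous_on)
  ultimately show "f y < f x"
    using deriv neg by (blast intro: DERIV_neg_imp_decreasing_open)
qed

locale axon_model =
  fixes a D g lc cinf cs :: real
  assumes a_pos: "0 < a" and D_pos: "0 < D" and g_pos: "0 < g" and lc_pos: "0 < lc"
    and cinf_pos: "0 < cinf"
begin

abbreviation "R \<equiv> RR a D g"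
abbreviation "p \<equiv> lam_plus a D g"
abbreviation "m \<equiv> lam_minus a D g"
abbreviation "f \<equiv> ff a D g lc"
abbreviation "C \<equiv> cstar a D g lc cinf"
abbreviation "Z \<equiv> z0 a D g lc"
abbreviation "steady \<equiv> steady_state a D g lc cinf cs"

lemma R_squared: "R\<^sup>2 = a\<^sup>2 + 4 * g * D"
  unfolding RR_def using g_pos D_pos by simp

lemma R_gt_a: "a < R"
  using g_pos D_pos a_pos unfolding RR_def by (simp add: real_less_rsqrt)

lemma R_pos: "0 < R"
  using R_gt_a a_pos by simp

lemma p_pos: "0 < p"
  unfolding lam_plus_def using R_pos a_pos D_pos by simp

lemma m_neg: "m < 0"
  unfolding lam_minus_def using R_gt_a D_pos by (simp add: divide_neg_pos)

lemma p_gt_m: "m < p"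
  using p_pos m_neg by simp

lemma p_minus_m: "p - m = R / D"
  unfolding lam_plus_def lam_minus_def using D_pos by (simp add: field_simps)

lemma p_plus_m: "D * (p + m) = a"
  unfolding lam_plus_def lam_minus_def using D_pos by (simp add: field_simps)

lemma p_times_m: "D * (p * m) = - g"
proof -
  have "D * (p * m) = (a + R) * (a - R) / (4 * D)"
    unfolding lam_plus_def lam_minus_def using D_pos by (simp add: field_simps)
  also have "\<dots> = - g"
    using R_squared D_pos by (simp add: field_simps power2_eq_square)
  finally show ?thesis .
qed

definition A :: real where
  "A = (R + a) / 2 - g * lc"

definition B :: real where
  "B = (R - a) / 2 + g * lc"

lemma B_pos: "0 < B"
  unfolding B_def using R_gt_a by (intro add_pos_pos mult_pos_pos g_pos lc_pos) simp

lemma ff_eq: "f z = (exp (- p * z) * A + exp (- m * z) * B) / R"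
  unfolding ff_def A_def B_def by simp

lemma cstar_eq: "C l x = cinf / R * (A * exp (p * (x - l)) + B * exp (m * (x - l)))"
  unfolding cstar_def A_def B_def ..

lemma characteristic_poly_factor: "D * x\<^sup>2 - a * x - g = D * (x - p) * (x - m)"
proof -
  have "D * x\<^sup>2 - a * x - g = D * x\<^sup>2 - D * (p + m) * x + D * (p * m)"
    by (simp add: p_plus_m p_times_m)
  then show ?thesis
    by (simp add: algebra_simps power2_eq_square)
qed

definition cstar_deriv :: "nat \<Rightarrow> real \<Rightarrow> real \<Rightarrow> real" where
  "cstar_deriv k l x = cinf / R * (A * p ^ k * exp (p * (x - l)) + B * m ^ k * exp (m * (x - l)))"

lemma cstar_eq_cstar_deriv_0: "C l = cstar_deriv 0 l"
  by (auto simp: cstar_eq cstar_deriv_def)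

lemma has_real_derivative_cstar_deriv:
  "(cstar_deriv k l has_real_derivative cstar_deriv (Suc k) l x) (at x)"
  unfolding cstar_deriv_def[abs_def] using R_pos
  by (auto intro!: derivative_eq_intros simp: field_simps)

lemma cstar_ode: "D * cstar_deriv 2 l x - a * cstar_deriv 1 l x - g * cstar_deriv 0 l x = 0"
proof -
  have "D * cstar_deriv 2 l x - a * cstar_deriv 1 l x - g * cstar_deriv 0 l x
      = cinf / R * (A * exp (p * (x - l)) * (D * p\<^sup>2 - a * p - g)
                    + B * exp (m * (x - l)) * (D * m\<^sup>2 - a * m - g))"
    unfolding cstar_deriv_def using R_pos by (simp add: field_simps power2_eq_square)
  then show ?thesis
    unfolding characteristic_poly_factor by simp
qed

lemma flux_identity: "A * (D * p) + B * (D * m) = R * (a - g * lc)"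
  unfolding A_def B_def lam_plus_def lam_minus_def using D_pos R_squared
  by (simp add: field_simps power2_eq_square)

lemma cstar_deriv_flux: "D * cstar_deriv 1 l l = (a - g * lc) * cinf"
proof -
  have "D * cstar_deriv 1 l l = cinf / R * (A * (D * p) + B * (D * m))"
    unfolding cstar_deriv_def by (simp add: algebra_simps)
  then show ?thesis
    unfolding flux_identity using R_pos by simp
qed

lemma cstar_eq_ff: "C l x = cinf * f (l - x)"
  unfolding cstar_eq ff_eq by (simp add: algebra_simps add_divide_distrib)

lemma ff_0: "f 0 = 1"
  unfolding ff_eq A_def B_def using R_pos by (simp add: field_simps)

lemma cstar_at_end: "C l l = cinf"
  by (simp add: cstar_eq_ff ff_0)

definition ff_deriv :: "real \<Rightarrow> real" where
  "ff_deriv z = - (p * A * exp (- p * z) + m * B * exp (- m * z)) / R"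

lemma has_real_derivative_ff: "(f has_real_derivative ff_deriv z) (at z)"
  unfolding ff_eq[abs_def] ff_deriv_def using R_pos
  by (auto intro!: derivative_eq_intros simp: field_simps)

lemma continuous_on_ff: "continuous_on S f"
  using has_real_derivative_ff by (meson DERIV_continuous continuous_at_imp_continuous_on)

lemma ff_deriv_0: "D * ff_deriv 0 = g * lc - a"
proof -
  have "D * ff_deriv 0 = - (A * (D * p) + B * (D * m)) / R"
    unfolding ff_deriv_def by (simp add: algebra_simps)
  then show ?thesis
    unfolding flux_identity using R_pos by simp
qed

definition K :: real where
  "K = p * A / (- m * B)"

lemma ff_deriv_factor: "R * ff_deriv z = - m * B * exp (- p * z) * (exp ((p - m) * z) - K)"
proof -
  have exp_sum: "exp (- p * z) * exp ((p - m) * z) = exp (- m * z)"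
    by (simp add: mult_exp_exp algebra_simps)
  have K_eq: "- m * B * K = p * A"
    unfolding K_def using m_neg B_pos by simp
  have "R * ff_deriv z = - m * B * exp (- m * z) - p * A * exp (- p * z)"
    unfolding ff_deriv_def using R_pos by simp
  also have "\<dots> = - m * B * (exp (- p * z) * exp ((p - m) * z)) - (- m * B * K) * exp (- p * z)"
    unfolding exp_sum K_eq ..
  finally show ?thesis
    by (simp add: algebra_simps)
qed

lemma ff_deriv_pos_iff: "0 < ff_deriv z \<longleftrightarrow> K < exp ((p - m) * z)"
  and ff_deriv_neg_iff: "ff_deriv z < 0 \<longleftrightarrow> exp ((p - m) * z) < K"
proof -
  define q where "q = - m * B * exp (- p * z)"
  have "0 < q"
    unfolding q_def using m_neg B_pos by (intro mult_pos_pos) simp_all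
  moreover have "R * ff_deriv z = q * (exp ((p - m) * z) - K)"
    unfolding q_def ff_deriv_factor ..
  ultimately show "0 < ff_deriv z \<longleftrightarrow> K < exp ((p - m) * z)"
    and "ff_deriv z < 0 \<longleftrightarrow> exp ((p - m) * z) < K"
    using R_pos by (metis diff_gt_0_iff_gt diff_less_0_iff_less zero_less_mult_iff mult_less_0_iff
        order_less_asym)+
qed

lemma K_gt_1_iff: "1 < K \<longleftrightarrow> g * lc < a"
proof -
  have "1 < K \<longleftrightarrow> ff_deriv 0 < 0"
    by (simp add: ff_deriv_neg_iff)
  also have "\<dots> \<longleftrightarrow> D * ff_deriv 0 < 0"
    using D_pos by (simp add: mult_less_0_iff)
  finally show ?thesis
    unfolding ff_deriv_0 by simp
qed

lemma z0_eq: "Z = ln K / (p - m)"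
proof -
  have "(R + a) * (R + a - 2 * g * lc) = 4 * D * (p * A)"
       "(R - a) * (R - a + 2 * g * lc) = 4 * D * (- m * B)"
    unfolding A_def B_def lam_plus_def lam_minus_def using D_pos by (simp_all add: field_simps)
  then show ?thesis
    unfolding z0_def p_minus_m K_def using D_pos by simp
qed

lemma exp_z0: "0 < K \<Longrightarrow> exp ((p - m) * Z) = K"
  unfolding z0_eq using p_gt_m by simp

lemma z0_pos: "g * lc < a \<Longrightarrow> 0 < Z"
  unfolding z0_eq using K_gt_1_iff p_gt_m by simp

lemma ff_strict_antimono_before_z0:
  assumes "g * lc < a"
  shows "strict_antimono_on {..Z} f"
proof (rule strict_antimono_on_if_deriv_neg[OF has_real_derivative_ff])
  fix x y z :: real assume "y \<in> {..Z}" "z < y"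
  then have "exp ((p - m) * z) < exp ((p - m) * Z)"
    using p_gt_m by (simp add: mult_less_cancel_left_pos)
  also have "\<dots> = K"
    using K_gt_1_iff assms exp_z0 by simp
  finally show "ff_deriv z < 0"
    unfolding ff_deriv_neg_iff .
qed

lemma ff_strict_mono_after_z0:
  assumes "g * lc < a"
  shows "strict_mono_on {Z..} f"
proof (rule strict_mono_on_if_deriv_pos[OF has_real_derivative_ff])
  fix x y z :: real assume "x \<in> {Z..}" "x < z"
  then have "exp ((p - m) * Z) < exp ((p - m) * z)"
    using p_gt_m by (simp add: mult_less_cancel_left_pos)
  moreover have "exp ((p - m) * Z) = K"
    using K_gt_1_iff assms exp_z0 by simp
  ultimately show "0 < ff_deriv z"
    unfolding ff_deriv_pos_iff by simp
qed

lemma ff_strict_mono: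
  assumes "a \<le> g * lc"
  shows "strict_mono_on {0..} f"
proof (rule strict_mono_on_if_deriv_pos[OF has_real_derivative_ff])
  fix x y z :: real assume "x \<in> {0..}" "x < z"
  then have "1 < exp ((p - m) * z)"
    using p_gt_m by simp
  moreover have "K \<le> 1"
    using K_gt_1_iff assms by simp
  ultimately have "K < exp ((p - m) * z)"
    by linarith
  then show "0 < ff_deriv z"
    unfolding ff_deriv_pos_iff .
qed

lemma ff_min_at_z0:
  assumes "g * lc < a" "l \<noteq> Z"
  shows "f Z < f l"
  using assms monotone_onD[OF ff_strict_antimono_before_z0, of l Z]
    monotone_onD[OF ff_strict_mono_after_z0, of Z l]
  by (cases "l < Z") auto

lemma ff_z0_lt_1: "g * lc < a \<Longrightarrow> f Z < 1"
  using monotone_onD[OF ff_strict_antimono_before_z0, of 0 Z] z0_pos ff_0 by simp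

lemma ff_unbounded: "\<exists>z\<ge>w. t \<le> f z"
proof -
  define z where "z = max w (max 0 ((t * R + \<bar>A\<bar>) / (- m * B)))"
  have "0 < - m * B"
    using m_neg B_pos by (intro mult_pos_pos) simp_all
  moreover have "(t * R + \<bar>A\<bar>) / (- m * B) \<le> z"
    unfolding z_def by (intro max.coboundedI2 max.cobounded2)
  ultimately have "t * R + \<bar>A\<bar> \<le> z * (- m * B)"
    by (simp only: pos_divide_le_eq)
  also have "\<dots> = - m * z * B"
    by (simp only: mult_ac)
  also have "\<dots> \<le> exp (- m * z) * B"
    using exp_ge_add_one_self[of "- m * z"] B_pos by (intro mult_right_mono) simp_all
  also have "\<dots> \<le> exp (- p * z) * A + \<bar>A\<bar> + exp (- m * z) * B"
  proof -
    have "exp (- p * z) \<le> 1"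
      using p_pos z_def by simp
    then have "\<bar>exp (- p * z) * A\<bar> \<le> \<bar>A\<bar>"
      by (simp add: abs_mult mult_left_le_one_le)
    then show ?thesis
      by linarith
  qed
  finally have "t * R \<le> R * f z"
    unfolding ff_eq using R_pos by simp
  then show ?thesis
    using R_pos z_def by (intro exI[of _ z]) simp
qed

lemma steady_state_cstar:
  assumes "0 < l" "f l = cs / cinf"
  shows "steady l (C l)"
proof -
  have deriv: "(C l has_real_derivative cstar_deriv 1 l x) (at x within S)"
    "(cstar_deriv 1 l has_real_derivative cstar_deriv 2 l x) (at x within S)" for x S
    using has_real_derivative_cstar_deriv[of 0 l x] has_real_derivative_cstar_deriv[of 1 l x]
    by (auto simp: cstar_eq_cstar_deriv_0 numeral_2_eq_2 intro: has_field_derivative_at_within)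
  have "continuous_on {0..l} (cstar_deriv 2 l)"
    by (meson DERIV_continuous continuous_at_imp_continuous_on has_real_derivative_cstar_deriv)
  moreover have "C l 0 = cs"
    using assms cinf_pos by (simp add: cstar_eq_ff)
  ultimately show ?thesis
    unfolding steady_state_def
    using assms(1) deriv cstar_ode[of l] cstar_deriv_flux[of l] cstar_at_end[of l]
    unfolding cstar_eq_cstar_deriv_0 by blast
qed

text \<open>The difference between a steady state and the profile has zero Cauchy data at \<open>x = l\<close>.\<close>
lemma steady_state_eq_cstar:
  assumes "steady l c"
  shows "0 < l" "f l = cs / cinf" "\<forall>x\<in>{0..l}. c x = C l x"
proof -
  obtain c1 c2 where "0 < l"
    and deriv: "\<And>x. x \<in> {0..l} \<Longrightarrow> (c has_real_derivative c1 x) (at x within {0..l}) \<and>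
                                      (c1 has_real_derivative c2 x) (at x within {0..l})"
    and "continuous_on {0..l} c2"
    and ode: "\<And>x. x \<in> {0<..<l} \<Longrightarrow> D * c2 x - a * c1 x - g * c x = 0"
    and flux: "D * c1 l = (a - g * lc) * cinf" and "c l = cinf" and "c 0 = cs"
    using assms unfolding steady_state_def by blast
  then show "0 < l" by simp
  have "continuous_on {0..l} c"
    by (rule DERIV_continuous_on[where D = c1]) (use deriv in blast)
  moreover have "continuous_on {0..l} c1"
    by (rule DERIV_continuous_on[where D = c2]) (use deriv in blast)
  ultimately have "continuous_on (closure {0<..<l}) (\<lambda>x. D * c2 x - a * c1 x - g * c x)"
    using \<open>0 < l\<close> \<open>continuous_on {0..l} c2\<close> by (simp add: continuous_on_diff continuous_on_mult_left)
  then have ode_closed: "D * c2 x - a * c1 x - g * c x = 0" if "x \<in> {0..l}" for x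
    by (rule continuous_constant_on_closure) (use ode that \<open>0 < l\<close> in auto)
  have diff_deriv:
    "((\<lambda>x. c x - C l x) has_real_derivative c1 x - cstar_deriv 1 l x) (at x within {0..l})"
    "((\<lambda>x. c1 x - cstar_deriv 1 l x) has_real_derivative c2 x - cstar_deriv 2 l x) (at x within {0..l})"
    if "x \<in> {0..l}" for x
    using deriv[OF that] has_real_derivative_cstar_deriv[of 0 l x] has_real_derivative_cstar_deriv[of 1 l x]
    unfolding cstar_eq_cstar_deriv_0 numeral_2_eq_2
    by (auto intro!: DERIV_diff intro: has_field_derivative_at_within)
  have diff_ode: "c2 x - cstar_deriv 2 l x = (p + m) * (c1 x - cstar_deriv 1 l x) - p * m * (c x - C l x)"
    if "x \<in> {0..l}" for x
  proof -
    have "D * (c2 x - cstar_deriv 2 l x) = a * (c1 x - cstar_deriv 1 l x) + g * (c x - C l x)"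
      using ode_closed[OF that] cstar_ode[of l x] unfolding cstar_eq_cstar_deriv_0
      by (simp add: algebra_simps)
    also have "\<dots> = D * (p + m) * (c1 x - cstar_deriv 1 l x) - D * (p * m) * (c x - C l x)"
      by (simp add: p_plus_m p_times_m)
    also have "\<dots> = D * ((p + m) * (c1 x - cstar_deriv 1 l x) - p * m * (c x - C l x))"
      by (simp add: algebra_simps)
    finally show ?thesis
      using D_pos by simp
  qed
  have "D * c1 l = D * cstar_deriv 1 l l"
    using flux cstar_deriv_flux by simp
  then have "c1 l - cstar_deriv 1 l l = 0"
    using D_pos by simp
  then have "c x - C l x = 0" if "x \<in> {0..l}" for x
    using linear_ode2_zero[where l = l, OF _ _ _ _ diff_deriv diff_ode that] \<open>0 < l\<close> \<open>c l = cinf\<close> cstar_at_end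
    by simp
  then show eq: "\<forall>x\<in>{0..l}. c x = C l x"
    by simp
  show "f l = cs / cinf"
    using eq \<open>0 < l\<close> \<open>c 0 = cs\<close> cinf_pos by (simp add: cstar_eq_ff field_simps)
qed

lemma cstar_strict_mono_on:
  assumes "strict_antimono_on T f" "(\<lambda>x. l - x) ` S \<subseteq> T"
  shows "strict_mono_on S (C l)"
proof (rule monotone_onI)
  fix x y assume "x \<in> S" "y \<in> S" "x < y"
  then have "f (l - x) < f (l - y)"
    using assms by (intro monotone_onD[OF assms(1)]) auto
  then show "C l x < C l y"
    using cinf_pos by (simp add: cstar_eq_ff)
qed

lemma cstar_strict_antimono_on:
  assumes "strict_mono_on T f" "(\<lambda>x. l - x) ` S \<subseteq> T"
  shows "strict_antimono_on S (C l)"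
proof (rule monotone_onI)
  fix x y assume "x \<in> S" "y \<in> S" "x < y"
  then have "f (l - y) < f (l - x)"
    using assms by (intro monotone_onD[OF assms(1)]) auto
  then show "C l y < C l x"
    using cinf_pos by (simp add: cstar_eq_ff)
qed

lemma ff_inj_before_z0: "g * lc < a \<Longrightarrow> inj_on f {..Z}"
  using ff_strict_antimono_before_z0 strict_antimono_iff_antimono by blast

lemma ff_inj_after_z0: "g * lc < a \<Longrightarrow> inj_on f {Z..}"
  using ff_strict_mono_after_z0 strict_mono_on_imp_inj_on by blast

lemma ff_gt_1: "a \<le> g * lc \<Longrightarrow> 0 < l \<Longrightarrow> 1 < f l"
  using monotone_onD[OF ff_strict_mono, of 0 l] ff_0 by simp

lemma ff_root_after:
  assumes "f x < t"
  obtains l where "x < l" "f l = t"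
proof -
  obtain w where "x \<le> w" "t \<le> f w"
    using ff_unbounded by blast
  then obtain l where "x \<le> l" "f l = t"
    using IVT'[OF less_imp_le[OF assms] \<open>t \<le> f w\<close> \<open>x \<le> w\<close> continuous_on_ff] by blast
  moreover have "l \<noteq> x"
    using assms \<open>f l = t\<close> by auto
  ultimately have "x < l"
    by simp
  then show thesis
    using \<open>f l = t\<close> by (rule that)
qed

lemma ff_two_roots:
  assumes "g * lc < a" "f Z < t" "t < 1"
  obtains l1 l2 where "0 < l1" "l1 < Z" "Z < l2" "f l1 = t" "f l2 = t"
    "\<And>l. f l = t \<Longrightarrow> l = l1 \<or> l = l2"
proof -
  have "f Z \<le> t" "t \<le> f 0" "0 \<le> Z"
    using assms ff_0 z0_pos by simp_all
  then obtain l1 where "0 \<le> l1" "l1 \<le> Z" "f l1 = t"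
    using IVT2'[OF _ _ _ continuous_on_ff] by blast
  moreover have "l1 \<noteq> 0" "l1 \<noteq> Z"
    using assms ff_0 \<open>f l1 = t\<close> by auto
  ultimately have "0 < l1" "l1 < Z"
    by simp_all
  obtain l2 where "Z < l2" "f l2 = t"
    using ff_root_after assms(2) by blast
  have "l = l1 \<or> l = l2" if "f l = t" for l
  proof (cases "l \<le> Z")
    case True
    then show ?thesis
      using inj_onD[OF ff_inj_before_z0[OF assms(1)], of l l1] that \<open>l1 < Z\<close> \<open>f l1 = t\<close> by simp
  next
    case False
    then show ?thesis
      using inj_onD[OF ff_inj_after_z0[OF assms(1)], of l l2] that \<open>Z < l2\<close> \<open>f l2 = t\<close> by simp
  qed
  with \<open>0 < l1\<close> \<open>l1 < Z\<close> \<open>Z < l2\<close> \<open>f l1 = t\<close> \<open>f l2 = t\<close> show thesis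
    by (rule that)
qed

lemma ff_root_beyond_z0:
  assumes "g * lc < a" "1 \<le> t"
  obtains l where "Z < l" "f l = t" "\<And>l'. 0 < l' \<Longrightarrow> f l' = t \<Longrightarrow> l' = l"
proof -
  have "f Z < t"
    using ff_z0_lt_1 assms by fastforce
  then obtain l where "Z < l" "f l = t"
    using ff_root_after by blast
  moreover have "l' = l" if "0 < l'" "f l' = t" for l'
  proof (cases "l' \<le> Z")
    case True
    then have "f l' < f 0"
      using monotone_onD[OF ff_strict_antimono_before_z0[OF assms(1)], of 0 l'] z0_pos assms(1) that
      by simp
    then show ?thesis
      using that assms ff_0 by simp
  next
    case False
    then show ?thesis
      using inj_onD[OF ff_inj_after_z0[OF assms(1)], of l' l] \<open>Z < l\<close> \<open>f l = t\<close> that by simp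
  qed
  ultimately show thesis
    by (rule that)
qed

lemma ff_unique_root:
  assumes "a \<le> g * lc" "1 < t"
  shows "\<exists>!l. 0 < l \<and> f l = t"
proof -
  obtain l where "0 < l" "f l = t"
    using ff_root_after[of 0 t] assms ff_0 by auto
  moreover have "inj_on f {0..}"
    using ff_strict_mono[OF assms(1)] strict_mono_on_imp_inj_on by blast
  ultimately show ?thesis
    by (metis atLeast_iff inj_onD less_imp_le)
qed

lemma no_steady_state_below_min:
  assumes "g * lc < a" "cs / cinf < f Z"
  shows "\<not> steady l c"
proof
  assume "steady l c"
  then have "f l < f Z"
    using steady_state_eq_cstar(2) assms(2) by simp
  then show False
    using ff_min_at_z0[OF assms(1), of l] by (cases "l = Z") auto
qed

lemma steady_state_unique_at_min:
  assumes "g * lc < a" "cs / cinf = f Z"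
  shows "steady Z (C Z)" "steady l c \<Longrightarrow> l = Z" "strict_mono_on {0..Z} (C Z)"
proof -
  show "steady Z (C Z)"
    using steady_state_cstar z0_pos assms by simp
  show "l = Z" if "steady l c"
    using steady_state_eq_cstar(2)[OF that] ff_min_at_z0[OF assms(1), of l] assms(2) by force
  show "strict_mono_on {0..Z} (C Z)"
    by (rule cstar_strict_mono_on[OF ff_strict_antimono_before_z0[OF assms(1)]]) auto
qed

lemma two_steady_states:
  assumes "g * lc < a" "f Z < cs / cinf" "cs / cinf < 1"
  obtains l1 l2 where "0 < l1" "l1 < Z" "Z < l2" "steady l1 (C l1)" "steady l2 (C l2)"
    "\<And>l c. steady l c \<Longrightarrow> l = l1 \<or> l = l2"
    "strict_mono_on {0..l1} (C l1)"
    "strict_antimono_on {0..l2 - Z} (C l2)" "strict_mono_on {l2 - Z..l2} (C l2)"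
proof -
  obtain l1 l2 where roots: "0 < l1" "l1 < Z" "Z < l2" "f l1 = cs / cinf" "f l2 = cs / cinf"
    and only_roots: "\<And>l. f l = cs / cinf \<Longrightarrow> l = l1 \<or> l = l2"
    using ff_two_roots[OF assms] by blast
  show thesis
  proof (rule that[OF roots(1-3)])
    show "steady l1 (C l1)" "steady l2 (C l2)"
      using roots z0_pos[OF assms(1)] by (auto intro: steady_state_cstar)
    show "l = l1 \<or> l = l2" if "steady l c" for l c
      using only_roots steady_state_eq_cstar(2)[OF that] by blast
    show "strict_mono_on {0..l1} (C l1)" "strict_mono_on {l2 - Z..l2} (C l2)"
      using roots by (auto intro!: cstar_strict_mono_on[OF ff_strict_antimono_before_z0[OF assms(1)]])
    show "strict_antimono_on {0..l2 - Z} (C l2)"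
      by (rule cstar_strict_antimono_on[OF ff_strict_mono_after_z0[OF assms(1)]]) auto
  qed
qed

lemma steady_state_unique_if_source_ge:
  assumes "g * lc < a" "1 \<le> cs / cinf"
  obtains l where "Z < l" "steady l (C l)" "\<And>l' c. steady l' c \<Longrightarrow> l' = l"
    "strict_antimono_on {0<..l - Z} (C l)" "strict_mono_on {l - Z..l} (C l)"
proof -
  obtain l where root: "Z < l" "f l = cs / cinf"
    and only_root: "\<And>l'. 0 < l' \<Longrightarrow> f l' = cs / cinf \<Longrightarrow> l' = l"
    using ff_root_beyond_z0[OF assms] by blast
  show thesis
  proof (rule that[OF root(1)])
    show "steady l (C l)"
      using root z0_pos[OF assms(1)] by (auto intro: steady_state_cstar)
    show "l' = l" if "steady l' c" for l' c
      using only_root steady_state_eq_cstar(1,2)[OF that] by blast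
    show "strict_antimono_on {0<..l - Z} (C l)"
      by (rule cstar_strict_antimono_on[OF ff_strict_mono_after_z0[OF assms(1)]]) auto
    show "strict_mono_on {l - Z..l} (C l)"
      by (rule cstar_strict_mono_on[OF ff_strict_antimono_before_z0[OF assms(1)]]) auto
  qed
qed

lemma steady_state_exists_iff:
  assumes "a \<le> g * lc"
  shows "(\<exists>l c. steady l c) \<longleftrightarrow> cinf < cs"
proof
  assume "\<exists>l c. steady l c"
  then obtain l c where "steady l c"
    by blast
  then have "1 < cs / cinf"
    using steady_state_eq_cstar(1,2) ff_gt_1[OF assms] by metis
  then show "cinf < cs"
    using cinf_pos by simp
next
  assume "cinf < cs"
  then have "1 < cs / cinf"
    using cinf_pos by simp
  then show "\<exists>l c. steady l c"
    using ff_unique_root[OF assms] steady_state_cstar by blast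
qed

lemma steady_state_strict_antimono:
  assumes "a \<le> g * lc" "steady l c"
  shows "strict_antimono_on {0..l} c"
proof -
  have "strict_antimono_on {0..l} (C l)"
    by (rule cstar_strict_antimono_on[OF ff_strict_mono[OF assms(1)]]) auto
  then show ?thesis
    using steady_state_eq_cstar(3)[OF assms(2)] by (simp add: monotone_on_def)
qed

end

theorem theorem1:
  fixes a D g lc cinf cs :: real
  assumes "a > 0" and "D > 0" and "g > 0" and "lc > 0" and "cinf > 0" and "cs \<ge> 0"
  shows
   "(g * lc < a \<longrightarrow>
      (let z = z0 a D g lc; S = steady_state a D g lc cinf cs;
           C = cstar a D g lc cinf; f = ff a D g lc in
       z > 0 \<and>
       (cs / cinf < f z \<and> f z < 1 \<longrightarrow> \<not> (\<exists>l c. S l c)) \<and>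
       (cs / cinf = f z \<longrightarrow>
          S z (C z) \<and>
          (\<forall>l c. S l c \<longrightarrow> l = z \<and> (\<forall>x\<in>{0..l}. c x = C z x)) \<and>
          strict_mono_on {0..z} (C z)) \<and>
       (f z < cs / cinf \<and> cs / cinf < 1 \<longrightarrow>
          (\<exists>l1 l2. 0 < l1 \<and> l1 < z \<and> z < l2 \<and>
             S l1 (C l1) \<and> S l2 (C l2) \<and>
             (\<forall>l c. S l c \<longrightarrow> (l = l1 \<or> l = l2) \<and> (\<forall>x\<in>{0..l}. c x = C l x)) \<and>
             strict_mono_on {0..l1} (C l1) \<and>
             strict_antimono_on {0..l2 - z} (C l2) \<and>
             strict_mono_on {l2 - z..l2} (C l2))) \<and>
       (cs / cinf \<ge> 1 \<longrightarrow>
          (\<exists>l. z < l \<and> S l (C l) \<and>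
             (\<forall>l' c. S l' c \<longrightarrow> l' = l \<and> (\<forall>x\<in>{0..l'}. c x = C l x)) \<and>
             strict_antimono_on {0<..l - z} (C l) \<and>
             strict_mono_on {l - z..l} (C l))))) \<and>
    (g * lc \<ge> a \<longrightarrow>
      (let S = steady_state a D g lc cinf cs;
           C = cstar a D g lc cinf; f = ff a D g lc in
       ((\<exists>l c. S l c) \<longleftrightarrow> cs > cinf) \<and>
       (cs > cinf \<longrightarrow>
          (\<exists>!l. l > 0 \<and> f l = cs / cinf) \<and>
          (\<forall>l. l > 0 \<and> f l = cs / cinf \<longrightarrow> S l (C l)) \<and>
          (\<forall>l c. S l c \<longrightarrow> l > 0 \<and> f l = cs / cinf \<and> (\<forall>x\<in>{0..l}. c x = C l x) \<and>
                            strict_antimono_on {0..l} c))))"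
proof -
  interpret axon_model a D g lc cinf cs
    using assms by unfold_locales
  have ratio_gt_1: "1 < cs / cinf \<longleftrightarrow> cinf < cs"
    using cinf_pos by simp
  show ?thesis
    unfolding Let_def
    apply (intro conjI impI; (elim conjE)?)
    subgoal by (rule z0_pos)
    subgoal using no_steady_state_below_min by blast
    subgoal using steady_state_unique_at_min(1) by blast
    subgoal using steady_state_unique_at_min(2) steady_state_eq_cstar(3) by blast
    subgoal using steady_state_unique_at_min(3) by blast
    subgoal by (erule two_steady_states; assumption?) (use steady_state_eq_cstar(3) in blast)
    subgoal by (erule steady_state_unique_if_source_ge; assumption?) (use steady_state_eq_cstar(3) in blast)
    subgoal by (rule steady_state_exists_iff)
    subgoal using ff_unique_root ratio_gt_1 by blast
    subgoal using steady_state_cstar by blast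
    subgoal using steady_state_eq_cstar steady_state_strict_antimono by blast
    done
qed

end
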